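(* Let $\Theta$ be a space of input histories satisfying the free-choice condition. Then $\Theta$ is causally complete if and only if for every $k\in\mathrm{Ext}(\Theta)$ with $|\mathrm{dom}(k)|\ge 2$ there exists $\omega\in\mathrm{dom}(k)$ such that $k|_{\mathrm{dom}(k)\setminus\{\omega\}}\in\mathrm{Ext}(\Theta)$.
   Context: A partial function on a family $(Y_x)_{x\in X}$ is a function $f$ with domain $\mathrm{dom}(f)\subseteq X$ and $f(x)\in Y_x$ for $x\in\mathrm{dom}(f)$; ordered by restriction: $f\le g$ iff $\mathrm{dom}(f)\subseteq\mathrm{dom}(g)$ and $g|_{\mathrm{dom}(f)}=f$. Two partial functions are compatible if they agree on the intersection of their domains; a compatible set $\mathcal F$ has join $\bigvee\mathcal F$, the partial function on $\bigcup_{f\in\mathcal F}\mathrm{dom}(f)$ extending each $f\in\mathcal F$. A set $\Theta$ is $\vee$-prime if for every compatible $\mathcal F\subseteq\Theta$ with $\bigvee\mathcal F\in\Theta$ we have $\bigvee\mathcal F\in\mathcal F$. A space of input histories is a finite $\vee$-prime set $\Theta$ of partial functions; $E^\Theta=\bigcup_{h\in\Theta}\mathrm{dom}(h)$, $I^\Theta_\omega=\{h(\omega):h\in\Theta,\omega\in\mathrm{dom}(h)\}$; $\mathrm{Ext}(\Theta)=\{\bigvee\mathcal F:\emptyset\ne\mathcal F\subseteq\Theta\text{ compatible}\}$. Free-choice condition: the maximal elements of $\mathrm{Ext}(\Theta)$ are exactly the total functions in $\prod_{\omega\in E^\Theta}I^\Theta_\omega$. $\mathrm{tips}_\Theta(h)=\mathrm{dom}(h)\setminus\bigcup\{\mathrm{dom}(k):k\in\mathrm{Ext}(\Theta),k<h\}$.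 $\Theta$ is causally complete if it satisfies free choice and $|\mathrm{tips}_\Theta(h)|=1$ for all $h\in\Theta$. *)

theory Defs
  imports Main
begin

(* Partial functions on a family (Y_x) are modelled as maps 'x => 'y option (family absorbed in one codomain type); the order f <= g is map inclusion. *)

definition compatible :: "('x \<rightharpoonup> 'y) set \<Rightarrow> bool" where
  "compatible F \<longleftrightarrow> (\<forall>f\<in>F. \<forall>g\<in>F. \<forall>x\<in>dom f \<inter> dom g. f x = g x)"

definition join :: "('x \<rightharpoonup> 'y) set \<Rightarrow> ('x \<rightharpoonup> 'y)" where
  "join F = (\<lambda>x. if \<exists>f\<in>F. x \<in> dom f then (SOME f. f \<in> F \<and> x \<in> dom f) x else None)"

definition vee_prime :: "('x \<rightharpoonup> 'y) set \<Rightarrow> bool" where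
  "vee_prime \<Theta> \<longleftrightarrow> (\<forall>F. F \<subseteq> \<Theta> \<and> compatible F \<and> join F \<in> \<Theta> \<longrightarrow> join F \<in> F)"

definition input_history_space :: "('x \<rightharpoonup> 'y) set \<Rightarrow> bool" where
  "input_history_space \<Theta> \<longleftrightarrow> finite \<Theta> \<and> vee_prime \<Theta>"

definition events :: "('x \<rightharpoonup> 'y) set \<Rightarrow> 'x set" where
  "events \<Theta> = (\<Union>h\<in>\<Theta>. dom h)"

definition inputs :: "('x \<rightharpoonup> 'y) set \<Rightarrow> 'x \<Rightarrow> 'y set" where
  "inputs \<Theta> \<omega> = {v. \<exists>h\<in>\<Theta>. \<omega> \<in> dom h \<and> h \<omega> = Some v}"

definition Ext :: "('x \<rightharpoonup> 'y) set \<Rightarrow> ('x \<rightharpoonup> 'y) set" where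
  "Ext \<Theta> = {join F | F. F \<noteq> {} \<and> F \<subseteq> \<Theta> \<and> compatible F}"

definition free_choice :: "('x \<rightharpoonup> 'y) set \<Rightarrow> bool" where
  "free_choice \<Theta> \<longleftrightarrow>
     {k \<in> Ext \<Theta>. \<forall>k'\<in>Ext \<Theta>. k \<subseteq>\<^sub>m k' \<longrightarrow> k' = k}
     = {f. dom f = events \<Theta> \<and> (\<forall>\<omega>\<in>events \<Theta>. the (f \<omega>) \<in> inputs \<Theta> \<omega>)}"

definition tips :: "('x \<rightharpoonup> 'y) set \<Rightarrow> ('x \<rightharpoonup> 'y) \<Rightarrow> 'x set" where
  "tips \<Theta> h = dom h - \<Union>{dom k | k. k \<in> Ext \<Theta> \<and> k \<subseteq>\<^sub>m h \<and> k \<noteq> h}"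

definition causally_complete :: "('x \<rightharpoonup> 'y) set \<Rightarrow> bool" where
  "causally_complete \<Theta> \<longleftrightarrow> free_choice \<Theta> \<and> (\<forall>h\<in>\<Theta>. \<exists>!\<omega>. \<omega> \<in> tips \<Theta> h)"

end

theory Submission
  imports Defs
begin

(* If every history has a unique tip and k in Ext has two events, pick the event \<omega> of k lying
   in the fewest histories below k. Any other event x of k lies in a history below k avoiding \<omega>:
   otherwise the histories below k through x and through \<omega> coincide, and a map_le-minimal one
   among them has both x and \<omega> as tips. The histories below k avoiding \<omega> then join to
   k restricted to dom k - {\<omega>}.
   Conversely, if h in \<Theta> has such an event \<omega>, all other events of h lie in a strictly smaller
   extension, so \<omega> is the only candidate tip; and it is a tip, since a smaller history through
   \<omega> together with the histories making up h |` (dom h - {\<omega>}) would cover h, which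
   \<or>-primality forbids. Histories with a single event are immediate, empty ones impossible. *)

lemma restrict_map_le: "m |` A \<subseteq>\<^sub>m m"
  by (auto simp: map_le_def)

lemma map_le_dom_antisym: "f \<subseteq>\<^sub>m g \<Longrightarrow> dom g \<subseteq> dom f \<Longrightarrow> f = g"
  by (metis map_le_antisym map_le_def map_le_implies_dom_le subset_antisym)

lemma restrict_map_dom: "m |` dom m = m"
  by (rule map_le_dom_antisym[OF restrict_map_le]) simp

lemma compatible_if_map_le: "\<forall>f\<in>F. f \<subseteq>\<^sub>m m \<Longrightarrow> compatible F"
  unfolding compatible_def map_le_def by (metis IntD1 IntD2)

lemma join_eq_if_compatible:
  assumes "compatible F" "f \<in> F" "x \<in> dom f"
  shows "join F x = f x"
proof -
  let ?g = "SOME g. g \<in> F \<and> x \<in> dom g"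
  have "?g \<in> F \<and> x \<in> dom ?g"
    using assms(2,3) by (rule someI[of _ f, OF conjI])
  then show ?thesis
    using assms unfolding join_def compatible_def by auto
qed

lemma dom_join: "dom (join F) = (\<Union>f\<in>F. dom f)"
proof -
  have iff: "x \<in> dom (join F) \<longleftrightarrow> (\<exists>f\<in>F. x \<in> dom f)" for x
  proof (cases "\<exists>f\<in>F. x \<in> dom f")
    case True
    then obtain f where "f \<in> F" "x \<in> dom f" by blast
    then have "x \<in> dom (SOME g. g \<in> F \<and> x \<in> dom g)"
      using someI[of "\<lambda>g. g \<in> F \<and> x \<in> dom g", OF conjI] by blast
    then show ?thesis
      using True unfolding join_def by (simp add: domIff)
  next
    case False
    then have "join F x = None"
      unfolding join_def by argo
    then show ?thesis
      using False by (simp add: domIff)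
  qed
  show ?thesis
    by (rule set_eqI) (simp only: iff UN_iff)
qed

lemma map_le_join: "compatible F \<Longrightarrow> f \<in> F \<Longrightarrow> f \<subseteq>\<^sub>m join F"
  by (simp add: map_le_def join_eq_if_compatible)

lemma join_eq_restrict:
  assumes "\<forall>f\<in>F. f \<subseteq>\<^sub>m m"
  shows "join F = m |` (\<Union>f\<in>F. dom f)"
proof
  fix x
  show "join F x = (m |` (\<Union>f\<in>F. dom f)) x"
  proof (cases "x \<in> (\<Union>f\<in>F. dom f)")
    case True
    then obtain f where f: "f \<in> F" "x \<in> dom f" by blast
    have "join F x = f x"
      by (rule join_eq_if_compatible[OF compatible_if_map_le[OF assms] f])
    also have "\<dots> = m x"
      using assms f unfolding map_le_def by blast
    finally show ?thesis
      using True by simp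
  next
    case False
    then have "x \<notin> dom (join F)"
      by (simp add: dom_join)
    then show ?thesis
      using False by (simp add: domIff)
  qed
qed

lemma ExtE:
  assumes "k \<in> Ext \<Theta>"
  obtains F where "F \<noteq> {}" "F \<subseteq> \<Theta>" "\<forall>f\<in>F. f \<subseteq>\<^sub>m k" "dom k = (\<Union>f\<in>F. dom f)"
proof -
  obtain F where F: "k = join F" "F \<noteq> {}" "F \<subseteq> \<Theta>" "compatible F"
    using assms unfolding Ext_def by blast
  show thesis
    by (rule that[OF F(2,3)]) (simp_all add: F(1) map_le_join[OF F(4)] dom_join)
qed

lemma restrict_in_Ext:
  assumes "F \<noteq> {}" "F \<subseteq> \<Theta>" "\<forall>f\<in>F. f \<subseteq>\<^sub>m m"
  shows "m |` (\<Union>f\<in>F. dom f) \<in> Ext \<Theta>"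
proof -
  have "join F \<in> Ext \<Theta>"
    using assms(1,2) compatible_if_map_le[OF assms(3)] unfolding Ext_def by blast
  then show ?thesis
    by (simp add: join_eq_restrict[OF assms(3)])
qed

lemma subset_Ext: "\<Theta> \<subseteq> Ext \<Theta>"
proof
  fix h assume "h \<in> \<Theta>"
  then have "h |` (\<Union>f\<in>{h}. dom f) \<in> Ext \<Theta>"
    by (intro restrict_in_Ext) auto
  then show "h \<in> Ext \<Theta>"
    by (simp add: restrict_map_dom)
qed

lemma vee_primeD: "vee_prime \<Theta> \<Longrightarrow> F \<subseteq> \<Theta> \<Longrightarrow> compatible F \<Longrightarrow> join F \<in> \<Theta> \<Longrightarrow> join F \<in> F"
  unfolding vee_prime_def by blast

lemma vee_prime_cover:
  assumes "vee_prime \<Theta>" "h \<in> \<Theta>" "F \<subseteq> \<Theta>" "\<forall>f\<in>F. f \<subseteq>\<^sub>m h" "(\<Union>f\<in>F. dom f) = dom h"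
  shows "h \<in> F"
proof -
  have "join F = h"
    using join_eq_restrict[OF assms(4)] assms(5) by (simp add: restrict_map_dom)
  then show ?thesis
    using vee_primeD[OF assms(1,3) compatible_if_map_le[OF assms(4)]] assms(2) by simp
qed

lemma dom_nonempty_if_vee_prime: "vee_prime \<Theta> \<Longrightarrow> h \<in> \<Theta> \<Longrightarrow> dom h \<noteq> {}"
  using vee_prime_cover[of \<Theta> h "{}"] by auto

lemma in_tips_iff:
  "x \<in> tips \<Theta> h \<longleftrightarrow> x \<in> dom h \<and> (\<forall>g\<in>\<Theta>. g \<subseteq>\<^sub>m h \<and> g \<noteq> h \<longrightarrow> x \<notin> dom g)"
proof
  assume "x \<in> tips \<Theta> h"
  then show "x \<in> dom h \<and> (\<forall>g\<in>\<Theta>. g \<subseteq>\<^sub>m h \<and> g \<noteq> h \<longrightarrow> x \<notin> dom g)"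
    using subset_Ext unfolding tips_def by blast
next
  assume x: "x \<in> dom h \<and> (\<forall>g\<in>\<Theta>. g \<subseteq>\<^sub>m h \<and> g \<noteq> h \<longrightarrow> x \<notin> dom g)"
  have "x \<notin> dom k" if k: "k \<in> Ext \<Theta>" "k \<subseteq>\<^sub>m h" "k \<noteq> h" for k
  proof
    assume "x \<in> dom k"
    moreover obtain F where F: "F \<subseteq> \<Theta>" "\<forall>f\<in>F. f \<subseteq>\<^sub>m k" "dom k = (\<Union>f\<in>F. dom f)"
      using ExtE[OF k(1)] by metis
    ultimately obtain f where f: "f \<in> F" "x \<in> dom f" by blast
    have "f \<subseteq>\<^sub>m h"
      using F(2) f(1) k(2) map_le_trans by blast
    moreover have "f \<noteq> h"
      using F(2) f(1) k(2,3) map_le_antisym by blast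
    ultimately show False
      using x F(1) f by blast
  qed
  then show "x \<in> tips \<Theta> h"
    using x unfolding tips_def by blast
qed

lemma tips_singleton_dom:
  assumes "dom h = {\<omega>}"
  shows "tips \<Theta> h = {\<omega>}"
proof -
  have "\<omega> \<notin> dom g" if "g \<subseteq>\<^sub>m h" "g \<noteq> h" for g
  proof
    assume "\<omega> \<in> dom g"
    then have "dom h \<subseteq> dom g"
      using assms by simp
    then show False
      using that map_le_dom_antisym by blast
  qed
  then show ?thesis
    using assms by (auto simp: in_tips_iff)
qed

lemma tips_eq_if_restrict_in_Ext:
  assumes vp: "vee_prime \<Theta>" and h: "h \<in> \<Theta>" "\<omega> \<in> dom h"
    and restr: "h |` (dom h - {\<omega>}) \<in> Ext \<Theta>"
  shows "tips \<Theta> h = {\<omega>}"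
proof -
  let ?h' = "h |` (dom h - {\<omega>})"
  have h'_below: "?h' \<subseteq>\<^sub>m h"
    by (rule restrict_map_le)
  have "\<omega> \<notin> dom ?h'"
    by simp
  then have h'_ne: "?h' \<noteq> h"
    using h(2) by metis
  have tips_sub: "tips \<Theta> h \<subseteq> {\<omega>}"
  proof -
    have "dom ?h' \<subseteq> \<Union>{dom k | k. k \<in> Ext \<Theta> \<and> k \<subseteq>\<^sub>m h \<and> k \<noteq> h}"
      using restr h'_below h'_ne by blast
    then show ?thesis
      unfolding tips_def by auto
  qed
  have not_below: "\<omega> \<notin> dom g" if g: "g \<in> \<Theta>" "g \<subseteq>\<^sub>m h" "g \<noteq> h" for g
  proof
    assume "\<omega> \<in> dom g"
    obtain G where G: "G \<subseteq> \<Theta>" "\<forall>f\<in>G. f \<subseteq>\<^sub>m ?h'" "dom ?h' = (\<Union>f\<in>G. dom f)"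
      using ExtE[OF restr] by metis
    have below: "\<forall>f\<in>insert g G. f \<subseteq>\<^sub>m h"
      using g(2) G(2) map_le_trans[OF _ h'_below] by auto
    have "(\<Union>f\<in>insert g G. dom f) = dom g \<union> dom ?h'"
      by (simp only: UN_insert G(3))
    also have "\<dots> = dom h"
      using \<open>\<omega> \<in> dom g\<close> map_le_implies_dom_le[OF g(2)] by auto
    finally have "h \<in> insert g G"
      using vee_prime_cover[OF vp h(1) _ below] g(1) G(1) by blast
    moreover have "h \<notin> G"
      using G(2) h(2) map_le_implies_dom_le by fastforce
    ultimately show False
      using g(3) by blast
  qed
  have "\<omega> \<in> tips \<Theta> h"
    using h(2) not_below by (simp add: in_tips_iff)
  with tips_sub show ?thesis
    by blast
qed

lemma finite_has_map_le_minimal: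
  assumes "finite A" "a \<in> A" "P a"
  obtains m where "m \<in> A" "P m" "\<forall>g\<in>A. g \<subseteq>\<^sub>m m \<and> g \<noteq> m \<longrightarrow> \<not> P g"
proof -
  let ?less = "\<lambda>g m. g \<subseteq>\<^sub>m m \<and> g \<noteq> m"
  have "asymp_on A ?less"
    by (auto intro: asymp_onI dest: map_le_antisym)
  moreover have "transp_on A ?less"
    by (rule transp_onI) (metis map_le_antisym map_le_trans)
  ultimately show ?thesis
    using Finite_Set.bex_min_element_with_property[OF assms(1)] assms(2,3) that by blast
qed

lemma ex_restrict_Diff_singleton_in_Ext:
  assumes fin: "finite \<Theta>"
    and tips_unique: "\<And>h x y. h \<in> \<Theta> \<Longrightarrow> x \<in> tips \<Theta> h \<Longrightarrow> y \<in> tips \<Theta> h \<Longrightarrow> x = y"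
    and k: "k \<in> Ext \<Theta>" "a \<in> dom k" "b \<in> dom k" "a \<noteq> b"
  shows "\<exists>\<omega>\<in>dom k. k |` (dom k - {\<omega>}) \<in> Ext \<Theta>"
proof -
  obtain F where F: "F \<subseteq> \<Theta>" "\<forall>f\<in>F. f \<subseteq>\<^sub>m k" "dom k = (\<Union>f\<in>F. dom f)"
    using ExtE[OF k(1)] by metis
  define through where "through x = {h \<in> \<Theta>. h \<subseteq>\<^sub>m k \<and> x \<in> dom h}" for x
  have through_iff: "h \<in> through x \<longleftrightarrow> h \<in> \<Theta> \<and> h \<subseteq>\<^sub>m k \<and> x \<in> dom h" for h x
    by (simp add: through_def)
  have finite_through: "finite (through x)" for x
    using fin by (simp add: through_def)
  obtain \<omega> where \<omega>: "\<omega> \<in> dom k" "\<And>x. x \<in> dom k \<Longrightarrow> card (through \<omega>) \<le> card (through x)"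
    using ex_has_least_nat[of "\<lambda>x. x \<in> dom k" a "\<lambda>x. card (through x)"] k(2) by metis
  have avoid: "\<exists>h\<in>through x. \<omega> \<notin> dom h" if x: "x \<in> dom k" "x \<noteq> \<omega>" for x
  proof (rule ccontr)
    assume "\<not> ?thesis"
    then have "through x \<subseteq> through \<omega>"
      by (auto simp: through_iff)
    then have same: "through x = through \<omega>"
      using card_seteq[OF finite_through] \<omega>(2)[OF x(1)] by blast
    obtain h0 where h0: "h0 \<in> F" "x \<in> dom h0"
      using x(1) unfolding F(3) by blast
    obtain h where h: "h \<in> \<Theta>" "h \<subseteq>\<^sub>m k \<and> x \<in> dom h"
      and min: "\<forall>g\<in>\<Theta>. g \<subseteq>\<^sub>m h \<and> g \<noteq> h \<longrightarrow> \<not> (g \<subseteq>\<^sub>m k \<and> x \<in> dom g)"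
      by (rule finite_has_map_le_minimal[OF fin, of h0 "\<lambda>g. g \<subseteq>\<^sub>m k \<and> x \<in> dom g"])
        (use h0 F in auto)
    have "x \<notin> dom g \<and> \<omega> \<notin> dom g" if g: "g \<in> \<Theta>" "g \<subseteq>\<^sub>m h" "g \<noteq> h" for g
    proof -
      have "g \<subseteq>\<^sub>m k"
        using map_le_trans[OF g(2)] h(2) by blast
      moreover have "g \<notin> through x"
        using min g by (simp add: through_iff)
      moreover have "g \<notin> through \<omega>"
        using calculation(2) same by simp
      ultimately show ?thesis
        using g(1) by (simp add: through_iff)
    qed
    moreover have "h \<in> through \<omega>"
      using h same[symmetric] by (simp add: through_iff)
    ultimately have "x \<in> tips \<Theta> h" "\<omega> \<in> tips \<Theta> h"
      using h(2) by (auto simp: in_tips_iff through_iff)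
    then show False
      using tips_unique[OF h(1)] x(2) by blast
  qed
  define G where "G = {h \<in> \<Theta>. h \<subseteq>\<^sub>m k \<and> \<omega> \<notin> dom h}"
  have "(\<Union>g\<in>G. dom g) = dom k - {\<omega>}"
  proof
    show "(\<Union>g\<in>G. dom g) \<subseteq> dom k - {\<omega>}"
      using map_le_implies_dom_le by (fastforce simp: G_def)
    show "dom k - {\<omega>} \<subseteq> (\<Union>g\<in>G. dom g)"
    proof
      fix x assume "x \<in> dom k - {\<omega>}"
      then obtain h where "h \<in> through x" "\<omega> \<notin> dom h"
        using avoid by blast
      then show "x \<in> (\<Union>g\<in>G. dom g)"
        by (auto simp: G_def through_iff)
    qed
  qed
  moreover obtain c where "c \<in> dom k" "c \<noteq> \<omega>"
    using k(2-4) by blast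
  ultimately have "G \<noteq> {}"
    by blast
  then have "k |` (\<Union>g\<in>G. dom g) \<in> Ext \<Theta>"
    by (rule restrict_in_Ext) (auto simp: G_def)
  then show ?thesis
    using \<open>(\<Union>g\<in>G. dom g) = dom k - {\<omega>}\<close> \<omega>(1) by auto
qed

lemma ex1_tip_if_deletable:
  assumes vp: "vee_prime \<Theta>" and h: "h \<in> \<Theta>"
    and deletable: "\<exists>a b. a \<in> dom h \<and> b \<in> dom h \<and> a \<noteq> b \<Longrightarrow>
      \<exists>\<omega>\<in>dom h. h |` (dom h - {\<omega>}) \<in> Ext \<Theta>"
  shows "\<exists>!\<omega>. \<omega> \<in> tips \<Theta> h"
proof (cases "\<exists>a b. a \<in> dom h \<and> b \<in> dom h \<and> a \<noteq> b")
  case True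
  then obtain \<omega> where "\<omega> \<in> dom h" "h |` (dom h - {\<omega>}) \<in> Ext \<Theta>"
    using deletable by blast
  then have "tips \<Theta> h = {\<omega>}"
    by (rule tips_eq_if_restrict_in_Ext[OF vp h])
  then show ?thesis by simp
next
  case False
  then obtain \<omega> where "dom h = {\<omega>}"
    using dom_nonempty_if_vee_prime[OF vp h] by blast
  then have "tips \<Theta> h = {\<omega>}"
    by (rule tips_singleton_dom)
  then show ?thesis by simp
qed

theorem theorem6:
  fixes \<Theta> :: "('x \<rightharpoonup> 'y) set"
  assumes "input_history_space \<Theta>" and "free_choice \<Theta>"
  shows "causally_complete \<Theta> \<longleftrightarrow>
    (\<forall>k\<in>Ext \<Theta>. (\<exists>a b. a \<in> dom k \<and> b \<in> dom k \<and> a \<noteq> b) \<longrightarrow>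
       (\<exists>\<omega>\<in>dom k. k |` (dom k - {\<omega>}) \<in> Ext \<Theta>))"
proof (intro iffI ballI impI)
  fix k assume cc: "causally_complete \<Theta>" and k: "k \<in> Ext \<Theta>"
    and "\<exists>a b. a \<in> dom k \<and> b \<in> dom k \<and> a \<noteq> b"
  then obtain a b where ab: "a \<in> dom k" "b \<in> dom k" "a \<noteq> b"
    by blast
  have fin: "finite \<Theta>"
    using assms(1) by (simp add: input_history_space_def)
  have "x = y" if "h \<in> \<Theta>" "x \<in> tips \<Theta> h" "y \<in> tips \<Theta> h" for h x y
    using cc that unfolding causally_complete_def by blast
  then show "\<exists>\<omega>\<in>dom k. k |` (dom k - {\<omega>}) \<in> Ext \<Theta>"
    by (rule ex_restrict_Diff_singleton_in_Ext[OF fin _ k ab])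
next
  assume deletable: "\<forall>k\<in>Ext \<Theta>. (\<exists>a b. a \<in> dom k \<and> b \<in> dom k \<and> a \<noteq> b) \<longrightarrow>
      (\<exists>\<omega>\<in>dom k. k |` (dom k - {\<omega>}) \<in> Ext \<Theta>)"
  have vp: "vee_prime \<Theta>"
    using assms(1) by (simp add: input_history_space_def)
  have "\<exists>!\<omega>. \<omega> \<in> tips \<Theta> h" if "h \<in> \<Theta>" for h
    using ex1_tip_if_deletable[OF vp that] deletable subset_Ext that by blast
  then show "causally_complete \<Theta>"
    using assms(2) by (simp add: causally_complete_def)
qed

end
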